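(* Let $\mathcal C$ be a two-sided quaternionic Hilbert space whose inner product satisfies $\langle c,qd\rangle_{\mathcal C}=\langle \overline{q}c,d\rangle_{\mathcal C}$ for all $c,d\in\mathcal C$ and $q\in\mathbb H$. Let $0<r<r_0<1$ and $R=1/r$, and let $\Phi(p)=\sum_{u=0}^\infty p^u\Phi_u$ ($\Phi_u\in\mathbf L(\mathcal C,\mathcal C)$) be an $\mathbf L(\mathcal C,\mathcal C)$-valued left slice hyperholomorphic function in the ball $\mathbb B_{r_0}=\{p\in\mathbb H:|p|<r_0\}$, continuous on $\{|p|\le r_0\}$ in the operator topology. For $\mathbf f=(f_v)_{v\ge1}$ and $\mathbf g=(g_u)_{u\ge1}$ in $\ell_{2,r}(\mathbb N,\mathcal C)$ define \[ [\mathbf f,\mathbf g]_\Phi=\sum_{v=1}^\infty\sum_{u=1}^v \langle \Phi_{v-u}f_v,g_u\rangle_{\mathcal C}+\sum_{u=1}^\infty\sum_{v=1}^u \langle \Phi^*_{u-v}f_v,g_u\rangle_{\mathcal C}. \] Then the form $[\cdot,\cdot]_\Phi$ is jointly continuous on $\ell_{2,r}(\mathbb N,\mathcal C)\times \ell_{2,r}(\mathbb N,\mathcal C)$.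
   Context: $\mathbb H$ denotes the real quaternions. $\ell_{2,r}(\mathbb N,\mathcal C)$ is the space of sequences $\mathbf f=(f_1,f_2,\ldots)$ with $f_u\in\mathcal C$ and $\sum_{u=1}^\infty R^{2u}\|f_u\|_{\mathcal C}^2<\infty$, with norm $\|\mathbf f\|^2=\sum_{u\ge1}R^{2u}\|f_u\|^2_{\mathcal C}$. A function $f$ on an axially symmetric open set $\Omega\subset\mathbb H$ with values in a two-sided quaternionic Banach space is left slice hyperholomorphic if $f(x+Iy)=\alpha(x,y)+I\beta(x,y)$ for all $I$ in the unit sphere $\mathbb S$ of purely imaginary quaternions, where $\alpha,\beta$ are real differentiable, satisfy $\partial_x\alpha-\partial_y\beta=0$, $\partial_y\alpha+\partial_x\beta=0$, and $\alpha(x,-y)=\alpha(x,y)$, $\beta(x,-y)=-\beta(x,y)$; on a ball centered at $0$ this is equivalent to having a convergent expansion $\sum_u p^u\Phi_u$. *)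

theory Defs
  imports "HOL-Analysis.Analysis"
begin

section \<open>Quaternions, as pairs of complex numbers (Cayley--Dickson: (a,b) = a + b j)\<close>

text \<open>The norm on quat is the product norm of complex x complex, i.e. the Euclidean
  norm of R^4, which is the quaternionic modulus.\<close>

type_synonym quat = "complex \<times> complex"

definition qmul :: "quat \<Rightarrow> quat \<Rightarrow> quat" where
  "qmul p q = (fst p * fst q - snd p * cnj (snd q), fst p * snd q + snd p * cnj (fst q))"

definition qcnj :: "quat \<Rightarrow> quat" where
  "qcnj p = (cnj (fst p), - snd p)"

definition qone :: quat where
  "qone = (1, 0)"

definition qreal :: "real \<Rightarrow> quat" where
  "qreal x = (complex_of_real x, 0)"

definition qRe :: "quat \<Rightarrow> real" where
  "qRe p = Re (fst p)"

fun qpow :: "quat \<Rightarrow> nat \<Rightarrow> quat" where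
  "qpow p 0 = qone"
| "qpow p (Suc n) = qmul p (qpow p n)"

text \<open>lm = left scalar multiplication, rm = right scalar multiplication (rm a c = c a),
  ip = quaternion-valued inner product, right linear in the first argument:
  ip (c a) d = ip c d * a, hermitian, positive definite; complete for the induced norm.\<close>

definition cnorm :: "('c \<Rightarrow> 'c \<Rightarrow> quat) \<Rightarrow> 'c \<Rightarrow> real" where
  "cnorm ip c = sqrt (qRe (ip c c))"

definition two_sided_qhilbert ::
  "(quat \<Rightarrow> 'c::ab_group_add \<Rightarrow> 'c) \<Rightarrow> (quat \<Rightarrow> 'c \<Rightarrow> 'c) \<Rightarrow> ('c \<Rightarrow> 'c \<Rightarrow> quat) \<Rightarrow> bool" where
  "two_sided_qhilbert lm rm ip \<longleftrightarrow>
     (\<forall>q c d. lm q (c + d) = lm q c + lm q d) \<and>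
     (\<forall>p q c. lm (p + q) c = lm p c + lm q c) \<and>
     (\<forall>p q c. lm (qmul p q) c = lm p (lm q c)) \<and>
     (\<forall>c. lm qone c = c) \<and>
     (\<forall>q c d. rm q (c + d) = rm q c + rm q d) \<and>
     (\<forall>p q c. rm (p + q) c = rm p c + rm q c) \<and>
     (\<forall>p q c. rm (qmul p q) c = rm q (rm p c)) \<and>
     (\<forall>c. rm qone c = c) \<and>
     (\<forall>p q c. lm p (rm q c) = rm q (lm p c)) \<and>
     (\<forall>x c. lm (qreal x) c = rm (qreal x) c) \<and>
     (\<forall>c d e. ip (c + d) e = ip c e + ip d e) \<and>
     (\<forall>c d. ip c d = qcnj (ip d c)) \<and>
     (\<forall>c d a. ip (rm a c) d = qmul (ip c d) a) \<and>
     (\<forall>c. \<exists>t\<ge>0. ip c c = qreal t) \<and>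
     (\<forall>c. ip c c = 0 \<longrightarrow> c = 0) \<and>
     (\<forall>X :: nat \<Rightarrow> 'c. (\<forall>\<epsilon>>0. \<exists>N. \<forall>m\<ge>N. \<forall>n\<ge>N. cnorm ip (X m - X n) < \<epsilon>)
          \<longrightarrow> (\<exists>L. (\<lambda>n. cnorm ip (X n - L)) \<longlonglongrightarrow> 0))"

definition qbounded_op :: "(quat \<Rightarrow> 'c::ab_group_add \<Rightarrow> 'c) \<Rightarrow> ('c \<Rightarrow> 'c \<Rightarrow> quat) \<Rightarrow> ('c \<Rightarrow> 'c) \<Rightarrow> bool" where
  "qbounded_op rm ip T \<longleftrightarrow>
     (\<forall>c d. T (c + d) = T c + T d) \<and> (\<forall>c a. T (rm a c) = rm a (T c)) \<and>
     (\<exists>K. \<forall>c. cnorm ip (T c) \<le> K * cnorm ip c)"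

definition opnorm :: "('c \<Rightarrow> 'c \<Rightarrow> quat) \<Rightarrow> ('c \<Rightarrow> 'c) \<Rightarrow> real" where
  "opnorm ip T = (SUP c\<in>{c. cnorm ip c \<le> 1}. cnorm ip (T c))"

definition qadjoint :: "('c \<Rightarrow> 'c \<Rightarrow> quat) \<Rightarrow> ('c \<Rightarrow> 'c) \<Rightarrow> ('c \<Rightarrow> 'c)" where
  "qadjoint ip T = (THE S. \<forall>c d. ip (T c) d = ip c (S d))"

text \<open>Sequences are functions nat => 'c; only the indices u >= 1 matter.\<close>

definition l2r :: "('c \<Rightarrow> 'c \<Rightarrow> quat) \<Rightarrow> real \<Rightarrow> (nat \<Rightarrow> 'c) set" where
  "l2r ip R = {f. summable (\<lambda>u. R ^ (2 * Suc u) * (cnorm ip (f (Suc u)))\<^sup>2)}"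

definition l2r_norm :: "('c \<Rightarrow> 'c \<Rightarrow> quat) \<Rightarrow> real \<Rightarrow> (nat \<Rightarrow> 'c) \<Rightarrow> real" where
  "l2r_norm ip R f = sqrt (\<Sum>u. R ^ (2 * Suc u) * (cnorm ip (f (Suc u)))\<^sup>2)"

definition form_part1 :: "('c \<Rightarrow> 'c \<Rightarrow> quat) \<Rightarrow> (nat \<Rightarrow> 'c \<Rightarrow> 'c) \<Rightarrow> (nat \<Rightarrow> 'c) \<Rightarrow> (nat \<Rightarrow> 'c) \<Rightarrow> nat \<Rightarrow> quat" where
  "form_part1 ip \<Phi> f g v = (\<Sum>u=1..v. ip (\<Phi> (v - u) (f v)) (g u))"

definition form_part2 :: "('c \<Rightarrow> 'c \<Rightarrow> quat) \<Rightarrow> (nat \<Rightarrow> 'c \<Rightarrow> 'c) \<Rightarrow> (nat \<Rightarrow> 'c) \<Rightarrow> (nat \<Rightarrow> 'c) \<Rightarrow> nat \<Rightarrow> quat" where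
  "form_part2 ip \<Phi> f g u = (\<Sum>v=1..u. ip (qadjoint ip (\<Phi> (u - v)) (f v)) (g u))"

definition phi_form :: "('c \<Rightarrow> 'c \<Rightarrow> quat) \<Rightarrow> (nat \<Rightarrow> 'c \<Rightarrow> 'c) \<Rightarrow> (nat \<Rightarrow> 'c) \<Rightarrow> (nat \<Rightarrow> 'c) \<Rightarrow> quat" where
  "phi_form ip \<Phi> f g = (\<Sum>v. form_part1 ip \<Phi> f g v) + (\<Sum>u. form_part2 ip \<Phi> f g u)"

end

theory Submission
  imports Defs "HOL-Library.Function_Algebras"
begin

(* Evaluating the expansion of \<Psi> at one real point t with r < t < r0 and comparing
   consecutive remainders gives Cauchy's estimate \<parallel>\<Phi>\<^sub>k c\<parallel> \<le> M t\<^sup>-\<^sup>k \<parallel>c\<parallel>.  Every f in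
   the weighted space satisfies \<parallel>f\<^sub>j\<parallel> \<le> \<parallel>f\<parallel> r\<^sup>j, so the (v,u) term of the first series is
   bounded by M \<parallel>f\<parallel> \<parallel>g\<parallel> (r/t)\<^sup>v\<^sup>-\<^sup>u (r\<^sup>2)\<^sup>u, and a Cauchy product of two geometric series
   shows that the series converges absolutely with sum at most a constant times \<parallel>f\<parallel> \<parallel>g\<parallel>.
   The adjoints in the second series are defined by a definite description; a quaternionic
   Riesz representation theorem (via the point of minimal norm on an affine hyperplane)
   shows that they exist, and then the second series is the quaternionic conjugate of the
   first one with f and g exchanged.  The form is therefore biadditive and bounded, hence
   jointly continuous. *)

lemma norm_quat: "norm (p::quat) = sqrt ((cmod (fst p))\<^sup>2 + (cmod (snd p))\<^sup>2)"
  by (simp add: norm_prod_def)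

lemma qmul_qcnj_self: "qmul p (qcnj p) = qreal ((norm p)\<^sup>2)"
  by (cases p) (simp add: qmul_def qcnj_def qreal_def norm_quat complex_eq_iff cmod_power2;
      simp add: power2_eq_square algebra_simps)

lemma qmul_qcnj_self_left: "qmul (qcnj p) p = qreal ((norm p)\<^sup>2)"
  by (cases p) (simp add: qmul_def qcnj_def qreal_def norm_quat complex_eq_iff cmod_power2;
      simp add: power2_eq_square algebra_simps)

lemma qmul_assoc: "qmul (qmul p q) s = qmul p (qmul q s)"
  by (simp add: qmul_def algebra_simps)

lemma qmul_diff_left: "qmul (p - q) s = qmul p s - qmul q s"
  by (simp add: qmul_def algebra_simps)

lemma qmul_diff_right: "qmul s (p - q) = qmul s p - qmul s q"
  by (simp add: qmul_def algebra_simps)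

lemma qmul_scaleR_left: "qmul (a *\<^sub>R p) q = a *\<^sub>R qmul p q"
  by (simp add: qmul_def algebra_simps scaleR_conv_of_real)

lemma qmul_qreal_left: "qmul (qreal a) p = a *\<^sub>R p"
  by (cases p) (simp add: qmul_def qreal_def scaleR_prod_def scaleR_conv_of_real)

lemma qmul_qreal_right: "qmul p (qreal a) = a *\<^sub>R p"
  by (cases p) (simp add: qmul_def qreal_def scaleR_prod_def scaleR_conv_of_real)

lemma qmul_qreal_qreal: "qmul (qreal a) (qreal b) = qreal (a * b)"
  by (simp add: qmul_def qreal_def)

lemma qcnj_qcnj [simp]: "qcnj (qcnj p) = p"
  by (simp add: qcnj_def)

lemma qcnj_zero [simp]: "qcnj 0 = 0"
  by (simp add: qcnj_def zero_prod_def)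

lemma qcnj_qmul: "qcnj (qmul p q) = qmul (qcnj q) (qcnj p)"
  by (simp add: qcnj_def qmul_def algebra_simps)

lemma qcnj_add: "qcnj (p + q) = qcnj p + qcnj q"
  by (simp add: qcnj_def)

lemma qcnj_minus: "qcnj (- p) = - qcnj p"
  by (simp add: qcnj_def)

lemma norm_qcnj [simp]: "norm (qcnj p) = norm p"
  by (simp add: qcnj_def norm_quat)

lemma bounded_linear_qcnj: "bounded_linear qcnj"
proof (rule bounded_linear_intro[of _ 1])
  show "qcnj (a *\<^sub>R p) = a *\<^sub>R qcnj p" for a p
    by (simp add: qcnj_def)
qed (simp_all add: qcnj_add)

lemma qcnj_sum: "qcnj (sum f A) = (\<Sum>x\<in>A. qcnj (f x))"
  by (rule linear_sum[OF bounded_linear.linear[OF bounded_linear_qcnj]])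

lemma qcnj_qreal [simp]: "qcnj (qreal a) = qreal a"
  by (simp add: qreal_def qcnj_def)

lemma qreal_one: "qreal 1 = qone"
  by (simp add: qreal_def qone_def)

lemma norm_qreal [simp]: "norm (qreal a) = \<bar>a\<bar>"
  by (simp add: qreal_def norm_quat)

lemma scaleR_qreal: "a *\<^sub>R qreal b = qreal (a * b)"
  by (simp add: qreal_def scaleR_conv_of_real)

lemma qpow_qreal: "qpow (qreal a) n = qreal (a ^ n)"
  by (induct n) (simp_all add: qreal_one qmul_qreal_qreal)

lemma qRe_qreal [simp]: "qRe (qreal a) = a"
  by (simp add: qRe_def qreal_def)

lemma qRe_add: "qRe (p + q) = qRe p + qRe q"
  by (simp add: qRe_def)

lemma qRe_diff: "qRe (p - q) = qRe p - qRe q"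
  by (simp add: qRe_def)

lemma qRe_minus: "qRe (- p) = - qRe p"
  by (simp add: qRe_def)

lemma qRe_scaleR: "qRe (a *\<^sub>R p) = a * qRe p"
  by (simp add: qRe_def)

lemma qRe_qcnj: "qRe (qcnj p) = qRe p"
  by (simp add: qRe_def qcnj_def)

lemma abs_qRe_le_norm: "\<bar>qRe p\<bar> \<le> norm p"
  unfolding qRe_def norm_quat
  by (metis abs_Re_le_cmod order_trans real_le_rsqrt le_add_same_cancel1 zero_le_power2)

lemma qRe_qmul_qcnj_scaleR: "qRe (qmul (qcnj (a *\<^sub>R q)) q) = a * (norm q)\<^sup>2"
  by (cases q) (simp add: qmul_def qcnj_def qRe_def norm_quat cmod_power2;
      simp add: power2_eq_square algebra_simps)

lemma qRe_qmul_scaleR_qcnj: "qRe (qmul (qcnj q) (a *\<^sub>R q)) = a * (norm q)\<^sup>2"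
  by (cases q) (simp add: qmul_def qcnj_def qRe_def norm_quat cmod_power2;
      simp add: power2_eq_square algebra_simps)

lemma triangular_series_bound:
  fixes \<tau> :: "nat \<Rightarrow> nat \<Rightarrow> 'a::banach"
  assumes "0 \<le> \<rho>" "\<rho> < 1" "0 \<le> \<sigma>" "\<sigma> < 1" "0 \<le> D"
    and bound: "\<And>v u. 1 \<le> u \<Longrightarrow> u \<le> v \<Longrightarrow> norm (\<tau> v u) \<le> D * \<rho> ^ (v - u) * \<sigma> ^ u"
  shows "summable (\<lambda>v. \<Sum>u=1..v. \<tau> v u)"
    and "norm (\<Sum>v. \<Sum>u=1..v. \<tau> v u) \<le> D / ((1 - \<rho>) * (1 - \<sigma>))"
proof -
  define W where "W v = (\<Sum>i\<le>v. \<sigma> ^ i * \<rho> ^ (v - i))" for v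
  have "W sums ((\<Sum>k. \<sigma> ^ k) * (\<Sum>k. \<rho> ^ k))"
    unfolding W_def using assms by (intro Cauchy_product_sums) (simp_all add: summable_geometric)
  then have W: "W sums (1 / ((1 - \<rho>) * (1 - \<sigma>)))"
    using assms by (simp add: suminf_geometric mult.commute)
  have norm_le: "norm (\<Sum>u=1..v. \<tau> v u) \<le> D * W v" for v
  proof -
    have "norm (\<Sum>u=1..v. \<tau> v u) \<le> (\<Sum>u=1..v. D * (\<sigma> ^ u * \<rho> ^ (v - u)))"
      using bound by (intro order_trans[OF norm_sum] sum_mono) (auto simp: ac_simps)
    also have "\<dots> \<le> (\<Sum>u\<le>v. D * (\<sigma> ^ u * \<rho> ^ (v - u)))"
      using assms by (intro sum_mono2) auto
    finally show ?thesis
      by (simp add: W_def sum_distrib_left)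
  qed
  have "summable (\<lambda>v. D * W v)"
    using W by (intro summable_mult) (simp add: sums_iff)
  then have norm_summable: "summable (\<lambda>v. norm (\<Sum>u=1..v. \<tau> v u))"
    by (rule summable_comparison_test[rotated]) (use norm_le in auto)
  then show "summable (\<lambda>v. \<Sum>u=1..v. \<tau> v u)"
    by (rule summable_norm_cancel)
  have "norm (\<Sum>v. \<Sum>u=1..v. \<tau> v u) \<le> (\<Sum>v. norm (\<Sum>u=1..v. \<tau> v u))"
    by (rule summable_norm[OF norm_summable])
  also have "\<dots> \<le> (\<Sum>v. D * W v)"
    by (rule suminf_le[OF norm_le norm_summable \<open>summable (\<lambda>v. D * W v)\<close>])
  also have "\<dots> = D / ((1 - \<rho>) * (1 - \<sigma>))"
    using W by (simp add: sums_iff suminf_mult)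
  finally show "norm (\<Sum>v. \<Sum>u=1..v. \<tau> v u) \<le> D / ((1 - \<rho>) * (1 - \<sigma>))" .
qed

lemma bounded_biadditive_continuous:
  fixes B :: "'a::ab_group_add \<Rightarrow> 'a \<Rightarrow> 'b::real_normed_vector" and N :: "'a \<Rightarrow> real"
  assumes diff: "\<And>x y. x \<in> S \<Longrightarrow> y \<in> S \<Longrightarrow> x - y \<in> S"
    and add_left: "\<And>x y z. x \<in> S \<Longrightarrow> y \<in> S \<Longrightarrow> z \<in> S \<Longrightarrow> B (x + y) z = B x z + B y z"
    and add_right: "\<And>x y z. x \<in> S \<Longrightarrow> y \<in> S \<Longrightarrow> z \<in> S \<Longrightarrow> B x (y + z) = B x y + B x z"
    and bound: "\<And>x y. x \<in> S \<Longrightarrow> y \<in> S \<Longrightarrow> norm (B x y) \<le> K * N x * N y"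
    and N_nonneg: "\<And>x. x \<in> S \<Longrightarrow> 0 \<le> N x" and "0 \<le> K"
    and x: "x \<in> S" and y: "y \<in> S" and "0 < \<epsilon>"
  shows "\<exists>\<delta>>0. \<forall>x'\<in>S. \<forall>y'\<in>S. N (x' - x) < \<delta> \<and> N (y' - y) < \<delta> \<longrightarrow> norm (B x' y' - B x y) < \<epsilon>"
proof -
  define C where "C = K * (N x + N y + 1)"
  define \<delta> where "\<delta> = min 1 (\<epsilon> / (C + 1))"
  have "0 \<le> C"
    using \<open>0 \<le> K\<close> N_nonneg[OF x] N_nonneg[OF y] by (simp add: C_def)
  then have "0 < \<delta>"
    using \<open>0 < \<epsilon>\<close> by (simp add: \<delta>_def)
  have "\<delta> \<le> 1" "\<delta> \<le> \<epsilon> / (C + 1)"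
    by (simp_all add: \<delta>_def)
  then have "\<delta> * (C + 1) \<le> \<epsilon>"
    using \<open>0 \<le> C\<close> by (simp add: le_divide_eq)
  have "norm (B x' y' - B x y) < \<epsilon>"
    if x': "x' \<in> S" and y': "y' \<in> S" and small: "N (x' - x) < \<delta>" "N (y' - y) < \<delta>" for x' y'
  proof -
    define a b where "a = x' - x" and "b = y' - y"
    have "a \<in> S" "b \<in> S"
      using diff x y x' y' by (simp_all add: a_def b_def)
    have "B x' y' = B x y' + B a y'"
      using add_left[OF x \<open>a \<in> S\<close> y'] by (simp add: a_def)
    also have "\<dots> = B x y + B x b + (B a y + B a b)"
      using add_right[OF x y \<open>b \<in> S\<close>] add_right[OF \<open>a \<in> S\<close> y \<open>b \<in> S\<close>] by (simp add: b_def)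
    finally have "B x' y' - B x y = B x b + B a y + B a b"
      by (simp add: algebra_simps)
    then have "norm (B x' y' - B x y) \<le> norm (B x b) + norm (B a y) + norm (B a b)"
      by (metis norm_triangle_ineq add_right_mono order_trans)
    also have "\<dots> \<le> K * N x * N b + K * N a * N y + K * N a * N b"
      using bound x y \<open>a \<in> S\<close> \<open>b \<in> S\<close> by (intro add_mono) auto
    also have "\<dots> \<le> K * N x * \<delta> + K * \<delta> * N y + K * \<delta> * 1"
      using small N_nonneg x y \<open>a \<in> S\<close> \<open>b \<in> S\<close> \<open>0 \<le> K\<close> \<open>0 < \<delta>\<close> \<open>\<delta> \<le> 1\<close> unfolding a_def b_def
      by (intro add_mono mult_mono mult_left_mono) auto
    also have "\<dots> = \<delta> * C"
      by (simp add: C_def algebra_simps)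
    also have "\<dots> < \<delta> * (C + 1)"
      using \<open>0 < \<delta>\<close> by simp
    finally show ?thesis
      using \<open>\<delta> * (C + 1) \<le> \<epsilon>\<close> by linarith
  qed
  then show ?thesis
    using \<open>0 < \<delta>\<close> by blast
qed

locale qhilbert =
  fixes lm rm :: "quat \<Rightarrow> 'c::ab_group_add \<Rightarrow> 'c" and ip :: "'c \<Rightarrow> 'c \<Rightarrow> quat"
  assumes qhilbert: "two_sided_qhilbert lm rm ip"
begin

lemma rm_qmul: "rm (qmul p q) c = rm q (rm p c)"
  using qhilbert unfolding two_sided_qhilbert_def by metis

lemma rm_qone: "rm qone c = c"
  using qhilbert unfolding two_sided_qhilbert_def by metis

lemma lm_qreal: "lm (qreal a) c = rm (qreal a) c"
  using qhilbert unfolding two_sided_qhilbert_def by metis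

lemma ip_add_left: "ip (c + d) e = ip c e + ip d e"
  using qhilbert unfolding two_sided_qhilbert_def by metis

lemma ip_qcnj: "ip c d = qcnj (ip d c)"
  using qhilbert unfolding two_sided_qhilbert_def by metis

lemma ip_rm_left: "ip (rm a c) d = qmul (ip c d) a"
  using qhilbert unfolding two_sided_qhilbert_def by metis

lemma ip_self_real: "\<exists>t\<ge>0. ip c c = qreal t"
  using qhilbert unfolding two_sided_qhilbert_def by metis

lemma ip_self_eq_0: "ip c c = 0 \<Longrightarrow> c = 0"
  using qhilbert unfolding two_sided_qhilbert_def by metis

lemma Cauchy_converges:
  "\<forall>\<epsilon>>0. \<exists>N. \<forall>m\<ge>N. \<forall>n\<ge>N. cnorm ip (X m - X n) < \<epsilon> \<Longrightarrow> \<exists>L. (\<lambda>n. cnorm ip (X n - L)) \<longlonglongrightarrow> 0"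
  using qhilbert unfolding two_sided_qhilbert_def by metis

lemma ip_add_right: "ip e (c + d) = ip e c + ip e d"
  using ip_qcnj[of e "c + d"] ip_qcnj[of e c] ip_qcnj[of e d] ip_add_left[of c d e] qcnj_add by simp

lemma ip_zero_left [simp]: "ip 0 d = 0"
  using ip_add_left[of 0 0 d] by simp

lemma ip_zero_right [simp]: "ip d 0 = 0"
  using ip_qcnj[of d 0] by simp

lemma ip_minus_left: "ip (- c) d = - ip c d"
  using ip_add_left[of c "- c" d] by (simp add: eq_neg_iff_add_eq_0 add.commute)

lemma ip_minus_right: "ip d (- c) = - ip d c"
  using ip_qcnj[of d "- c"] ip_qcnj[of d c] ip_minus_left[of c d] qcnj_minus by simp

lemma ip_diff_left: "ip (c - e) d = ip c d - ip e d"
  using ip_add_left[of c "- e" d] ip_minus_left[of e d] by simp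

lemma ip_diff_right: "ip d (c - e) = ip d c - ip d e"
  using ip_add_right[of d c "- e"] ip_minus_right[of d e] by simp

lemma ip_rm_right: "ip c (rm a d) = qmul (qcnj a) (ip c d)"
  using ip_qcnj[of c "rm a d"] ip_qcnj[of d c] ip_rm_left[of a d c] qcnj_qmul by simp

lemma ip_self: "ip c c = qreal ((cnorm ip c)\<^sup>2)"
proof -
  obtain t where "0 \<le> t" "ip c c = qreal t"
    using ip_self_real by blast
  then show ?thesis
    by (simp add: cnorm_def)
qed

lemma qRe_ip_self: "qRe (ip c c) = (cnorm ip c)\<^sup>2"
  by (simp add: ip_self)

lemma cnorm_nonneg: "0 \<le> cnorm ip c"
  using ip_self_real[of c] by (auto simp: cnorm_def)

lemma cnorm_eq_0_iff: "cnorm ip c = 0 \<longleftrightarrow> c = 0"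
proof
  assume "cnorm ip c = 0"
  then have "ip c c = 0"
    by (simp add: ip_self qreal_def zero_prod_def)
  then show "c = 0"
    by (rule ip_self_eq_0)
qed (simp add: cnorm_def qRe_def)

lemma cnorm_zero [simp]: "cnorm ip 0 = 0"
  by (simp add: cnorm_eq_0_iff)

lemma cnorm_minus: "cnorm ip (- c) = cnorm ip c"
  by (simp add: cnorm_def ip_minus_left ip_minus_right)

lemma cnorm_rm: "cnorm ip (rm a c) = norm a * cnorm ip c"
proof -
  have "ip (rm a c) (rm a c) = qmul (qmul (qcnj a) (ip c c)) a"
    by (simp add: ip_rm_left ip_rm_right qmul_assoc)
  also have "\<dots> = qreal ((norm a * cnorm ip c)\<^sup>2)"
    by (simp add: ip_self qmul_qreal_right qmul_scaleR_left qmul_qcnj_self_left scaleR_qreal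
        power_mult_distrib mult.commute)
  finally have "qRe (ip (rm a c) (rm a c)) = (norm a * cnorm ip c)\<^sup>2"
    by simp
  then show ?thesis
    using cnorm_nonneg[of c] by (simp add: cnorm_def[of _ "rm a c"])
qed

lemma norm_ip_le: "norm (ip c d) \<le> cnorm ip c * cnorm ip d"
proof (cases "d = 0")
  case False
  let ?q = "ip c d" and ?m = "cnorm ip c" and ?n = "cnorm ip d"
  have n_pos: "0 < ?n"
    using False cnorm_eq_0_iff cnorm_nonneg by (metis order_le_less)
  \<comment> \<open>expand \<open>0 \<le> \<parallel>c - d a\<parallel>\<^sup>2\<close> at the minimising coefficient \<open>a = \<langle>c,d\<rangle> / \<parallel>d\<parallel>\<^sup>2\<close>\<close>
  define s where "s = 1 / ?n\<^sup>2"
  define a where "a = s *\<^sub>R ?q"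
  have "0 \<le> qRe (ip (c - rm a d) (c - rm a d))"
    by (simp add: qRe_ip_self)
  also have "\<dots> = ?m\<^sup>2 - qRe (qmul (qcnj a) ?q) - qRe (qmul (ip d c) a) + qRe (ip (rm a d) (rm a d))"
    by (simp add: ip_diff_left ip_diff_right ip_rm_left ip_rm_right qRe_diff qRe_ip_self
        qmul_diff_right qmul_diff_left qmul_assoc)
  also have "ip d c = qcnj ?q"
    by (rule ip_qcnj)
  also have "qRe (ip (rm a d) (rm a d)) = (norm a)\<^sup>2 * ?n\<^sup>2"
    by (simp add: qRe_ip_self cnorm_rm power_mult_distrib)
  also have "qRe (qmul (qcnj a) ?q) = s * (norm ?q)\<^sup>2"
    unfolding a_def by (rule qRe_qmul_qcnj_scaleR)
  also have "qRe (qmul (qcnj ?q) a) = s * (norm ?q)\<^sup>2"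
    unfolding a_def by (rule qRe_qmul_scaleR_qcnj)
  also have "(norm a)\<^sup>2 = s\<^sup>2 * (norm ?q)\<^sup>2"
    unfolding a_def by (simp add: power_mult_distrib)
  finally have "0 \<le> ?m\<^sup>2 - s * (norm ?q)\<^sup>2 - s * (norm ?q)\<^sup>2 + s\<^sup>2 * (norm ?q)\<^sup>2 * ?n\<^sup>2"
    by (simp add: mult.assoc)
  moreover have "s\<^sup>2 * (norm ?q)\<^sup>2 * ?n\<^sup>2 = s * (norm ?q)\<^sup>2"
    using n_pos by (simp add: s_def power2_eq_square)
  ultimately have "(norm ?q)\<^sup>2 / ?n\<^sup>2 \<le> ?m\<^sup>2"
    by (simp add: s_def)
  then have "(norm ?q)\<^sup>2 \<le> (?m * ?n)\<^sup>2"
    using n_pos by (simp add: divide_le_eq power_mult_distrib)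
  then show ?thesis
    by (rule power2_le_imp_le[OF _ mult_nonneg_nonneg[OF cnorm_nonneg cnorm_nonneg]])
qed (simp add: cnorm_nonneg)

lemma cnorm_add_power2: "(cnorm ip (c + d))\<^sup>2 = (cnorm ip c)\<^sup>2 + (cnorm ip d)\<^sup>2 + 2 * qRe (ip c d)"
  using qRe_qcnj[of "ip d c"]
  by (simp add: qRe_ip_self[symmetric] ip_add_left ip_add_right qRe_add ip_qcnj[of c d])

lemma cnorm_triangle: "cnorm ip (c + d) \<le> cnorm ip c + cnorm ip d"
proof -
  have "qRe (ip c d) \<le> cnorm ip c * cnorm ip d"
    using norm_ip_le[of c d] abs_qRe_le_norm[of "ip c d"] by linarith
  then have "(cnorm ip (c + d))\<^sup>2 \<le> (cnorm ip c + cnorm ip d)\<^sup>2"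
    by (simp add: cnorm_add_power2 power2_sum)
  then show ?thesis
    by (rule power2_le_imp_le[OF _ add_nonneg_nonneg[OF cnorm_nonneg cnorm_nonneg]])
qed

lemma cnorm_diff_le: "cnorm ip (c - d) \<le> cnorm ip c + cnorm ip d"
  using cnorm_triangle[of c "- d"] by (simp add: cnorm_minus)

lemma cnorm_diff_commute: "cnorm ip (c - d) = cnorm ip (d - c)"
  using cnorm_minus[of "c - d"] by simp

lemma cnorm_sum_le: "cnorm ip (sum f A) \<le> (\<Sum>i\<in>A. cnorm ip (f i))"
proof (induct A rule: infinite_finite_induct)
  case (insert x F)
  then show ?case
    using cnorm_triangle[of "f x" "sum f F"] by simp
qed simp_all

subsection \<open>Riesz representation and adjoints\<close>

definition smul :: "real \<Rightarrow> 'c \<Rightarrow> 'c" where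
  "smul a c = rm (qreal a) c"

definition ip_re :: "'c \<Rightarrow> 'c \<Rightarrow> real" where
  "ip_re c d = qRe (ip c d)"

lemma smul_one [simp]: "smul 1 c = c"
  by (simp add: smul_def qreal_one rm_qone)

lemma smul_smul: "smul a (smul b c) = smul (b * a) c"
  by (simp add: smul_def rm_qmul[symmetric] qmul_qreal_qreal)

lemma cnorm_smul: "cnorm ip (smul a c) = \<bar>a\<bar> * cnorm ip c"
  by (simp add: smul_def cnorm_rm)

lemma ip_re_smul_right: "ip_re c (smul a d) = a * ip_re c d"
  by (simp add: smul_def ip_re_def ip_rm_right qmul_qreal_left qRe_scaleR)

lemma ip_re_commute: "ip_re c d = ip_re d c"
  by (metis ip_re_def ip_qcnj qRe_qcnj)

lemma ip_re_diff_right: "ip_re c (d - e) = ip_re c d - ip_re c e"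
  by (simp add: ip_re_def ip_diff_right qRe_diff)

lemma ip_re_self: "ip_re c c = (cnorm ip c)\<^sup>2"
  by (simp add: ip_re_def qRe_ip_self)

lemma cnorm_add_power2_ip_re: "(cnorm ip (c + d))\<^sup>2 = (cnorm ip c)\<^sup>2 + (cnorm ip d)\<^sup>2 + 2 * ip_re c d"
  by (simp add: cnorm_add_power2 ip_re_def)

lemma parallelogram:
  "(cnorm ip (c - d))\<^sup>2 + (cnorm ip (c + d))\<^sup>2 = 2 * (cnorm ip c)\<^sup>2 + 2 * (cnorm ip d)\<^sup>2"
  using cnorm_add_power2_ip_re[of c "- d"] cnorm_add_power2_ip_re[of c d]
  by (simp add: cnorm_minus ip_re_def ip_minus_right qRe_minus)

lemma tendsto_cnorm:
  assumes "(\<lambda>n. cnorm ip (X n - L)) \<longlonglongrightarrow> 0"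
  shows "(\<lambda>n. cnorm ip (X n)) \<longlonglongrightarrow> cnorm ip L"
proof -
  have "norm (cnorm ip (X n) - cnorm ip L) \<le> cnorm ip (X n - L)" for n
    using cnorm_triangle[of "X n - L" L] cnorm_triangle[of "L - X n" "X n"]
      cnorm_diff_commute[of "X n" L] by auto
  then have "(\<lambda>n. cnorm ip (X n) - cnorm ip L) \<longlonglongrightarrow> 0"
    by (intro Lim_null_comparison[OF _ assms]) simp
  then show ?thesis
    by (rule LIM_zero_cancel)
qed

lemma minimizing_sequence_exists:
  assumes "A \<noteq> {}"
  obtains X where "\<And>n. X n \<in> A"
    and "\<And>n. (cnorm ip (X n))\<^sup>2 < (Inf (cnorm ip ` A))\<^sup>2 + inverse (real (Suc n))"
proof -
  let ?m = "Inf (cnorm ip ` A)"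
  have bdd: "bdd_below (cnorm ip ` A)"
    by (meson bdd_belowI2 cnorm_nonneg)
  have "0 \<le> ?m"
    using assms by (intro cInf_greatest) (auto simp: cnorm_nonneg)
  have "\<exists>x\<in>A. (cnorm ip x)\<^sup>2 < ?m\<^sup>2 + \<delta>" if "0 < \<delta>" for \<delta>
  proof -
    have "?m < sqrt (?m\<^sup>2 + \<delta>)"
      using that \<open>0 \<le> ?m\<close> by (intro real_less_rsqrt) simp
    then obtain x where x: "x \<in> A" "cnorm ip x < sqrt (?m\<^sup>2 + \<delta>)"
      using assms bdd by (subst (asm) cInf_less_iff) auto
    have "(cnorm ip x)\<^sup>2 < (sqrt (?m\<^sup>2 + \<delta>))\<^sup>2"
      using x(2) cnorm_nonneg by (intro power_strict_mono) auto
    then show ?thesis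
      using x(1) that by auto
  qed
  then have "\<forall>n. \<exists>x\<in>A. (cnorm ip x)\<^sup>2 < ?m\<^sup>2 + inverse (real (Suc n))"
    by simp
  then show ?thesis
    using that by metis
qed

lemma minimizing_sequence_Cauchy:
  assumes convex: "\<And>x y. x \<in> A \<Longrightarrow> y \<in> A \<Longrightarrow> smul (1/2) (x + y) \<in> A"
    and lower: "\<And>x. x \<in> A \<Longrightarrow> m \<le> cnorm ip x" and "0 \<le> m"
    and X: "\<And>n. X n \<in> A" "\<And>n. (cnorm ip (X n))\<^sup>2 < m\<^sup>2 + inverse (real (Suc n))"
  shows "\<forall>\<epsilon>>0. \<exists>N. \<forall>n\<ge>N. \<forall>k\<ge>N. cnorm ip (X n - X k) < \<epsilon>"
proof (intro allI impI)
  fix \<epsilon> :: real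
  assume "0 < \<epsilon>"
  \<comment> \<open>parallelogram law, with \<open>\<parallel>X n + X k\<parallel> \<ge> 2 m\<close> because the midpoint lies in \<open>A\<close>\<close>
  have diff_le: "(cnorm ip (X n - X k))\<^sup>2 \<le> 2 * inverse (real (Suc n)) + 2 * inverse (real (Suc k))"
    for n k
  proof -
    have "m \<le> cnorm ip (smul (1/2) (X n + X k))"
      using convex X lower by blast
    then have "(2 * m)\<^sup>2 \<le> (cnorm ip (X n + X k))\<^sup>2"
      using \<open>0 \<le> m\<close> by (intro power_mono) (auto simp: cnorm_smul)
    then show ?thesis
      using parallelogram[of "X n" "X k"] X(2)[of n] X(2)[of k] by (simp add: power_mult_distrib)
  qed
  obtain N :: nat where N: "4 / \<epsilon>\<^sup>2 < real (Suc N)"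
    using reals_Archimedean2 by (metis less_Suc_eq less_trans lessI of_nat_less_iff)
  have "cnorm ip (X n - X k) < \<epsilon>" if "N \<le> n" "N \<le> k" for n k
  proof -
    have "inverse (real (Suc n)) \<le> inverse (real (Suc N))" "inverse (real (Suc k)) \<le> inverse (real (Suc N))"
      using that by (simp_all add: le_imp_inverse_le)
    moreover have "4 * inverse (real (Suc N)) < \<epsilon>\<^sup>2"
      using N \<open>0 < \<epsilon>\<close> by (simp add: field_simps)
    ultimately have "(cnorm ip (X n - X k))\<^sup>2 < \<epsilon>\<^sup>2"
      using diff_le[of n k] by linarith
    then show ?thesis
      using \<open>0 < \<epsilon>\<close> by (simp add: power_less_imp_less_base)
  qed
  then show "\<exists>N. \<forall>n\<ge>N. \<forall>k\<ge>N. cnorm ip (X n - X k) < \<epsilon>"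
    by blast
qed

context
  fixes \<psi> :: "'c \<Rightarrow> real"
  assumes psi_add: "\<And>c d. \<psi> (c + d) = \<psi> c + \<psi> d"
    and psi_smul: "\<And>a c. \<psi> (smul a c) = a * \<psi> c"
begin

lemma psi_diff: "\<psi> (c - d) = \<psi> c - \<psi> d"
  using psi_add[of "c - d" d] by simp

lemma min_norm_point_exists:
  assumes bound: "\<And>c. \<bar>\<psi> c\<bar> \<le> K * cnorm ip c" and "\<psi> x0 \<noteq> 0"
  obtains L where "\<psi> L = 1" and "\<And>x. \<psi> x = 1 \<Longrightarrow> cnorm ip L \<le> cnorm ip x"
proof -
  define A where "A = {x. \<psi> x = 1}"
  define m where "m = Inf (cnorm ip ` A)"
  have "smul (1 / \<psi> x0) x0 \<in> A"
    using \<open>\<psi> x0 \<noteq> 0\<close> by (simp add: A_def psi_smul)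
  then have "A \<noteq> {}"
    by blast
  have m_le: "m \<le> cnorm ip x" if "x \<in> A" for x
    unfolding m_def using that by (intro cInf_lower bdd_belowI2[of _ 0]) (auto simp: cnorm_nonneg)
  have "0 \<le> m"
    unfolding m_def using \<open>A \<noteq> {}\<close> by (intro cInf_greatest) (auto simp: cnorm_nonneg)
  obtain X where X: "\<And>n. X n \<in> A" "\<And>n. (cnorm ip (X n))\<^sup>2 < m\<^sup>2 + inverse (real (Suc n))"
    using minimizing_sequence_exists[OF \<open>A \<noteq> {}\<close>] unfolding m_def by blast
  have convex: "smul (1/2) (x + y) \<in> A" if "x \<in> A" "y \<in> A" for x y
    using that by (simp add: A_def psi_smul psi_add)
  have "\<forall>\<epsilon>>0. \<exists>N. \<forall>n\<ge>N. \<forall>k\<ge>N. cnorm ip (X n - X k) < \<epsilon>"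
    using minimizing_sequence_Cauchy[OF convex m_le \<open>0 \<le> m\<close> X] by blast
  then obtain L where L: "(\<lambda>n. cnorm ip (X n - L)) \<longlonglongrightarrow> 0"
    using Cauchy_converges by blast
  have "\<forall>\<^sub>F n in sequentially. norm (\<psi> (X n) - \<psi> L) \<le> K * cnorm ip (X n - L)"
    using bound by (simp add: psi_diff[symmetric])
  then have "(\<lambda>n. \<psi> (X n) - \<psi> L) \<longlonglongrightarrow> 0"
    by (rule Lim_null_comparison[OF _ tendsto_mult_right_zero[OF L]])
  moreover have "\<psi> (X n) = 1" for n
    using X(1) by (simp add: A_def)
  ultimately have "\<psi> L = 1"
    by (simp add: LIM_zero_iff LIMSEQ_const_iff)
  have "(\<lambda>n. (cnorm ip (X n))\<^sup>2) \<longlonglongrightarrow> (cnorm ip L)\<^sup>2"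
    by (intro tendsto_intros tendsto_cnorm L)
  moreover have "(\<lambda>n. m\<^sup>2 + inverse (real (Suc n))) \<longlonglongrightarrow> m\<^sup>2 + 0"
    by (intro tendsto_intros LIMSEQ_inverse_real_of_nat)
  ultimately have "(cnorm ip L)\<^sup>2 \<le> m\<^sup>2"
    using X(2) by (intro LIMSEQ_le[of _ _ "\<lambda>n. m\<^sup>2 + inverse (real (Suc n))"]) (auto intro: less_imp_le)
  then have "cnorm ip L \<le> m"
    using \<open>0 \<le> m\<close> by (rule power2_le_imp_le)
  then show ?thesis
    using that \<open>\<psi> L = 1\<close> m_le by (force simp: A_def)
qed

lemma min_norm_point_orthogonal:
  assumes "\<psi> L = 1" and min: "\<And>x. \<psi> x = 1 \<Longrightarrow> cnorm ip L \<le> cnorm ip x" and "\<psi> n = 0"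
  shows "ip_re L n = 0"
proof -
  define \<rho> where "\<rho> = ip_re L n"
  define N where "N = (cnorm ip n)\<^sup>2"
  define s where "s = - \<rho> / (N + 1)"
  have "0 \<le> N"
    by (simp add: N_def)
  \<comment> \<open>\<open>L + s n\<close> lies on the same level set, so its norm cannot be smaller than that of \<open>L\<close>\<close>
  have "cnorm ip L \<le> cnorm ip (L + smul s n)"
    using assms by (intro min) (simp add: psi_add psi_smul)
  then have "(cnorm ip L)\<^sup>2 \<le> (cnorm ip (L + smul s n))\<^sup>2"
    using cnorm_nonneg by (simp add: power_mono)
  then have "0 \<le> s\<^sup>2 * N + 2 * s * \<rho>"
    by (simp add: cnorm_add_power2_ip_re cnorm_smul ip_re_smul_right power_mult_distrib N_def \<rho>_def)
  moreover have "\<rho> = - s * (N + 1)"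
    using \<open>0 \<le> N\<close> by (simp add: s_def field_simps)
  ultimately have "s\<^sup>2 * (N + 2) \<le> 0"
    by (simp add: power2_eq_square algebra_simps)
  then have "s = 0"
    using \<open>0 \<le> N\<close> by (simp add: mult_le_0_iff)
  then show ?thesis
    using \<open>\<rho> = - s * (N + 1)\<close> by (simp add: \<rho>_def)
qed

lemma riesz_representation_real:
  assumes bound: "\<And>c. \<bar>\<psi> c\<bar> \<le> K * cnorm ip c"
  obtains z where "\<And>c. \<psi> c = ip_re c z"
proof (cases "\<forall>c. \<psi> c = 0")
  case True
  then show ?thesis
    by (intro that[of 0]) (simp add: ip_re_def qRe_def)
next
  case False
  then obtain L where L: "\<psi> L = 1" "\<And>x. \<psi> x = 1 \<Longrightarrow> cnorm ip L \<le> cnorm ip x"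
    using min_norm_point_exists[OF bound] by blast
  have "L \<noteq> 0"
    using L(1) psi_diff[of 0 0] by auto
  then have "cnorm ip L \<noteq> 0"
    by (simp add: cnorm_eq_0_iff)
  have "\<psi> c = ip_re c (smul (1 / (cnorm ip L)\<^sup>2) L)" for c
  proof -
    have "ip_re L (c - smul (\<psi> c) L) = 0"
      using L by (intro min_norm_point_orthogonal) (auto simp: psi_diff psi_smul)
    then have "ip_re L c = \<psi> c * (cnorm ip L)\<^sup>2"
      by (simp add: ip_re_diff_right ip_re_smul_right ip_re_self)
    then show ?thesis
      using \<open>cnorm ip L \<noteq> 0\<close> by (simp add: ip_re_smul_right ip_re_commute[of c L])
  qed
  then show ?thesis
    using that by blast
qed

end

lemma riesz_representation:
  fixes \<phi> :: "'c \<Rightarrow> quat"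
  assumes add: "\<And>c d. \<phi> (c + d) = \<phi> c + \<phi> d"
    and rm: "\<And>a c. \<phi> (rm a c) = qmul (\<phi> c) a"
    and bound: "\<And>c. norm (\<phi> c) \<le> K * cnorm ip c"
  obtains z where "\<And>c. \<phi> c = ip c z"
proof -
  \<comment> \<open>a quaternion is determined by the real parts of its right multiples\<close>
  obtain z where z: "\<And>c. qRe (\<phi> c) = ip_re c z"
  proof (rule riesz_representation_real[of "\<lambda>c. qRe (\<phi> c)"])
    show "qRe (\<phi> (c + d)) = qRe (\<phi> c) + qRe (\<phi> d)" for c d
      by (simp add: add qRe_add)
    show "qRe (\<phi> (smul a c)) = a * qRe (\<phi> c)" for a c
      by (simp add: smul_def rm qmul_qreal_right qRe_scaleR)
    show "\<bar>qRe (\<phi> c)\<bar> \<le> K * cnorm ip c" for c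
      using bound[of c] abs_qRe_le_norm order_trans by blast
  qed blast
  have "\<phi> c = ip c z" for c
  proof -
    define q where "q = \<phi> c - ip c z"
    have "qRe (qmul q (qcnj q)) = 0"
      using z[of "rm (qcnj q) c"] by (simp add: q_def qmul_diff_left qRe_diff rm ip_re_def ip_rm_left)
    then have "norm q = 0"
      by (simp add: qmul_qcnj_self)
    then show ?thesis
      by (simp add: q_def)
  qed
  then show ?thesis
    using that by blast
qed

lemma qbounded_op_add: "qbounded_op rm ip T \<Longrightarrow> T (c + d) = T c + T d"
  by (simp add: qbounded_op_def)

lemma qbounded_op_rm: "qbounded_op rm ip T \<Longrightarrow> T (rm a c) = rm a (T c)"
  unfolding qbounded_op_def by blast

lemma qbounded_op_bound:
  assumes "qbounded_op rm ip T"
  obtains K where "\<And>c. cnorm ip (T c) \<le> K * cnorm ip c"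
proof -
  have "\<exists>K. \<forall>c. cnorm ip (T c) \<le> K * cnorm ip c"
    using assms by (simp add: qbounded_op_def)
  then show ?thesis
    using that by blast
qed

lemma ip_qadjoint:
  assumes T: "qbounded_op rm ip T"
  shows "ip (T c) d = ip c (qadjoint ip T d)"
proof -
  obtain K where K: "\<And>c. cnorm ip (T c) \<le> K * cnorm ip c"
    using qbounded_op_bound[OF T] by blast
  have "\<exists>e. \<forall>c. ip (T c) d = ip c e" for d
  proof -
    have "norm (ip (T c) d) \<le> (K * cnorm ip d) * cnorm ip c" for c
    proof -
      have "norm (ip (T c) d) \<le> cnorm ip (T c) * cnorm ip d"
        by (rule norm_ip_le)
      also have "\<dots> \<le> K * cnorm ip c * cnorm ip d"
        by (rule mult_right_mono[OF K cnorm_nonneg])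
      finally show ?thesis
        by (simp add: ac_simps)
    qed
    then show ?thesis
      using riesz_representation[of "\<lambda>c. ip (T c) d"]
      by (metis T qbounded_op_add qbounded_op_rm ip_add_left ip_rm_left)
  qed
  then obtain S where S: "\<And>c d. ip (T c) d = ip c (S d)"
    by metis
  have unique: "S' = S" if "\<forall>c d. ip (T c) d = ip c (S' d)" for S'
  proof
    fix d
    have "ip (S' d - S d) (S' d - S d) = 0"
      using that S by (simp add: ip_diff_right)
    then have "S' d - S d = 0"
      by (rule ip_self_eq_0)
    then show "S' d = S d"
      by simp
  qed
  have "\<forall>c d. ip (T c) d = ip c (qadjoint ip T d)"
    unfolding qadjoint_def by (rule theI[of _ S]) (use S unique in blast)+
  then show ?thesis
    by blast
qed

subsection \<open>Cauchy estimates for operator-valued power series\<close>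

lemma qbounded_op_zero: "qbounded_op rm ip T \<Longrightarrow> T 0 = 0"
  using qbounded_op_add[of T 0 0] by simp

lemma cnorm_le_opnorm:
  assumes "\<And>c. cnorm ip (T c) \<le> K * cnorm ip c" and "cnorm ip c \<le> 1"
  shows "cnorm ip (T c) \<le> opnorm ip T"
  unfolding opnorm_def
proof (rule cSUP_upper)
  show "c \<in> {c. cnorm ip c \<le> 1}"
    using assms(2) by simp
  have "cnorm ip (T x) \<le> \<bar>K\<bar>" if "cnorm ip x \<le> 1" for x
  proof -
    have "cnorm ip (T x) \<le> \<bar>K\<bar> * cnorm ip x"
      using assms(1)[of x] cnorm_nonneg[of x] by (meson abs_ge_self mult_right_mono order_trans)
    also have "\<dots> \<le> \<bar>K\<bar>"
      using that by (simp add: mult_left_le)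
    finally show ?thesis .
  qed
  then show "bdd_above ((\<lambda>c. cnorm ip (T c)) ` {c. cnorm ip c \<le> 1})"
    by (intro bdd_aboveI2) auto
qed

lemma opnorm_tendsto_zero_unit_ball_bound:
  assumes bounded: "\<And>N c. cnorm ip (T N c) \<le> K N * cnorm ip c"
    and "(\<lambda>N. opnorm ip (T N)) \<longlonglongrightarrow> 0"
  obtains B where "0 \<le> B" and "\<And>N c. cnorm ip c \<le> 1 \<Longrightarrow> cnorm ip (T N c) \<le> B"
proof -
  obtain B where B: "\<And>N. norm (opnorm ip (T N)) \<le> B"
    using assms(2) by (metis BseqE convergent_imp_Bseq convergentI)
  have "cnorm ip (T N c) \<le> B" if "cnorm ip c \<le> 1" for N c
  proof -
    have "cnorm ip (T N c) \<le> opnorm ip (T N)"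
      by (rule cnorm_le_opnorm[OF bounded that])
    also have "\<dots> \<le> B"
      using B[of N] by (auto dest: abs_le_D1)
    finally show ?thesis .
  qed
  moreover have "0 \<le> B"
    by (rule order_trans[OF norm_ge_zero B])
  ultimately show ?thesis
    using that by blast
qed

lemma cnorm_le_of_unit_ball:
  assumes T: "qbounded_op rm ip T" and unit: "\<And>c. cnorm ip c \<le> 1 \<Longrightarrow> cnorm ip (T c) \<le> B"
  shows "cnorm ip (T c) \<le> B * cnorm ip c"
proof (cases "c = 0")
  case True
  then show ?thesis
    by (simp add: qbounded_op_zero[OF T])
next
  case False
  define s where "s = cnorm ip c"
  have "0 < s"
    using False cnorm_eq_0_iff[of c] cnorm_nonneg[of c] by (simp add: s_def)
  have "T c = T (smul s (smul (1 / s) c))"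
    using \<open>0 < s\<close> by (simp add: smul_smul)
  also have "\<dots> = smul s (T (smul (1 / s) c))"
    using T by (simp add: smul_def qbounded_op_rm)
  finally have "cnorm ip (T c) = s * cnorm ip (T (smul (1 / s) c))"
    using \<open>0 < s\<close> by (simp add: cnorm_smul)
  also have "\<dots> \<le> s * B"
    using \<open>0 < s\<close> by (intro mult_left_mono unit) (simp_all add: cnorm_smul s_def)
  finally show ?thesis
    by (simp add: s_def mult.commute)
qed

lemma cnorm_sum_smul_le:
  assumes "\<And>u c. cnorm ip (F u c) \<le> K u * cnorm ip c"
  shows "cnorm ip (\<Sum>u\<in>I. smul (a u) (F u c)) \<le> (\<Sum>u\<in>I. \<bar>a u\<bar> * K u) * cnorm ip c"
proof -
  have "cnorm ip (\<Sum>u\<in>I. smul (a u) (F u c)) \<le> (\<Sum>u\<in>I. \<bar>a u\<bar> * cnorm ip (F u c))"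
    using cnorm_sum_le[of "\<lambda>u. smul (a u) (F u c)" I] by (simp add: cnorm_smul)
  also have "\<dots> \<le> (\<Sum>u\<in>I. \<bar>a u\<bar> * (K u * cnorm ip c))"
    by (intro sum_mono mult_left_mono assms) simp
  also have "\<dots> = (\<Sum>u\<in>I. \<bar>a u\<bar> * K u) * cnorm ip c"
    by (simp add: sum_distrib_right mult.assoc)
  finally show ?thesis .
qed

lemma power_series_coeff_bound:
  assumes Phi: "\<And>u. qbounded_op rm ip (\<Phi> u)" and P: "qbounded_op rm ip P" and "0 < t"
    and conv: "(\<lambda>N. opnorm ip (\<lambda>c. P c - (\<Sum>u<N. lm (qpow (qreal t) u) (\<Phi> u c)))) \<longlonglongrightarrow> 0"
  obtains M where "0 \<le> M" and "\<And>k c. cnorm ip (\<Phi> k c) \<le> M * (1 / t) ^ k * cnorm ip c"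
proof -
  define D where "D N c = P c - (\<Sum>u<N. smul (t ^ u) (\<Phi> u c))" for N c
  have D_tendsto: "(\<lambda>N. opnorm ip (D N)) \<longlonglongrightarrow> 0"
    using conv by (simp add: D_def[abs_def] qpow_qreal lm_qreal smul_def)
  obtain KP where KP: "\<And>c. cnorm ip (P c) \<le> KP * cnorm ip c"
    using qbounded_op_bound[OF P] by blast
  have "\<exists>K. \<forall>c. cnorm ip (\<Phi> u c) \<le> K * cnorm ip c" for u
    using qbounded_op_bound[OF Phi[of u]] by blast
  then obtain KPhi where KPhi: "\<And>u c. cnorm ip (\<Phi> u c) \<le> KPhi u * cnorm ip c"
    by metis
  have D_bound: "cnorm ip (D N c) \<le> (KP + (\<Sum>u<N. \<bar>t ^ u\<bar> * KPhi u)) * cnorm ip c" for N c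
  proof -
    have "cnorm ip (D N c) \<le> cnorm ip (P c) + cnorm ip (\<Sum>u<N. smul (t ^ u) (\<Phi> u c))"
      unfolding D_def by (rule cnorm_diff_le)
    moreover have "cnorm ip (\<Sum>u<N. smul (t ^ u) (\<Phi> u c)) \<le> (\<Sum>u<N. \<bar>t ^ u\<bar> * KPhi u) * cnorm ip c"
      by (rule cnorm_sum_smul_le[OF KPhi])
    ultimately show ?thesis
      using KP[of c] unfolding distrib_right by linarith
  qed
  obtain B where "0 \<le> B" and D_le: "\<And>N c. cnorm ip c \<le> 1 \<Longrightarrow> cnorm ip (D N c) \<le> B"
    using opnorm_tendsto_zero_unit_ball_bound[OF D_bound D_tendsto] by blast
  \<comment> \<open>consecutive remainders differ by the single term \<open>t\<^sup>N \<Phi>\<^sub>N c\<close>\<close>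
  have "cnorm ip (\<Phi> N c) \<le> 2 * B * (1 / t) ^ N" if "cnorm ip c \<le> 1" for N c
  proof -
    have "t ^ N * cnorm ip (\<Phi> N c) = cnorm ip (D N c - D (Suc N) c)"
      using \<open>0 < t\<close> by (simp add: D_def cnorm_smul)
    also have "\<dots> \<le> 2 * B"
      using cnorm_diff_le[of "D N c" "D (Suc N) c"] D_le[OF that, of N] D_le[OF that, of "Suc N"] by linarith
    finally show ?thesis
      using \<open>0 < t\<close> by (simp add: field_simps)
  qed
  then have "cnorm ip (\<Phi> k c) \<le> 2 * B * (1 / t) ^ k * cnorm ip c" for k c
    by (rule cnorm_le_of_unit_ball[OF Phi])
  moreover have "0 \<le> 2 * B"
    using \<open>0 \<le> B\<close> by simp
  ultimately show ?thesis
    using that by blast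
qed

subsection \<open>The weighted sequence space\<close>

definition geom_dominated :: "real \<Rightarrow> (nat \<Rightarrow> 'c) \<Rightarrow> real \<Rightarrow> bool" where
  "geom_dominated r h H \<longleftrightarrow> 0 \<le> H \<and> (\<forall>j\<ge>1. cnorm ip (h j) \<le> H * r ^ j)"

lemma l2r_norm_nonneg:
  assumes "h \<in> l2r ip R"
  shows "0 \<le> l2r_norm ip R h"
proof -
  have "0 \<le> (\<Sum>u. R ^ (2 * Suc u) * (cnorm ip (h (Suc u)))\<^sup>2)"
    using assms unfolding l2r_def
    by (intro suminf_nonneg) (simp_all only: mem_Collect_eq mult_nonneg_nonneg zero_le_even_power' zero_le_power2)
  then show ?thesis
    by (simp add: l2r_norm_def)
qed

lemma l2r_geom_dominated:
  assumes "0 < r" and h: "h \<in> l2r ip (1 / r)"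
  shows "geom_dominated r h (l2r_norm ip (1 / r) h)"
  unfolding geom_dominated_def
proof (intro conjI allI impI)
  show "0 \<le> l2r_norm ip (1 / r) h"
    using h by (rule l2r_norm_nonneg)
  fix j :: nat
  assume "1 \<le> j"
  then obtain i where i: "j = Suc i"
    by (cases j) auto
  define T where "T u = (1 / r) ^ (2 * Suc u) * (cnorm ip (h (Suc u)))\<^sup>2" for u
  have "summable T"
    using h by (simp only: l2r_def T_def[abs_def] mem_Collect_eq)
  have "0 \<le> T u" for u
    unfolding T_def by (intro mult_nonneg_nonneg zero_le_even_power' zero_le_power2)
  then have "T i \<le> suminf T"
    using sum_le_suminf[OF \<open>summable T\<close>, of "{i}"] by simp
  also have "T i = ((1 / r) ^ j * cnorm ip (h j))\<^sup>2"
    unfolding T_def i power_mult_distrib by (simp only: power_mult[symmetric] mult.commute)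
  finally have "(1 / r) ^ j * cnorm ip (h j) \<le> l2r_norm ip (1 / r) h"
    unfolding l2r_norm_def T_def by (rule real_le_rsqrt)
  then show "cnorm ip (h j) \<le> l2r_norm ip (1 / r) h * r ^ j"
    using \<open>0 < r\<close> by (simp add: field_simps)
qed

lemma l2r_diff:
  assumes h: "h \<in> l2r ip R" and g: "g \<in> l2r ip R"
  shows "h - g \<in> l2r ip R"
proof -
  have bound: "norm (R ^ (2 * Suc u) * (cnorm ip ((h - g) (Suc u)))\<^sup>2)
      \<le> 2 * (R ^ (2 * Suc u) * (cnorm ip (h (Suc u)))\<^sup>2) + 2 * (R ^ (2 * Suc u) * (cnorm ip (g (Suc u)))\<^sup>2)"
    for u
  proof -
    let ?a = "cnorm ip (h (Suc u))" and ?b = "cnorm ip (g (Suc u))"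
    have "(cnorm ip ((h - g) (Suc u)))\<^sup>2 \<le> (?a + ?b)\<^sup>2"
      using cnorm_diff_le cnorm_nonneg by (intro power_mono) auto
    also have "\<dots> \<le> 2 * ?a\<^sup>2 + 2 * ?b\<^sup>2"
      using sum_squares_bound[of ?a ?b] by (simp add: power2_sum)
    finally have "R ^ (2 * Suc u) * (cnorm ip ((h - g) (Suc u)))\<^sup>2 \<le> R ^ (2 * Suc u) * (2 * ?a\<^sup>2 + 2 * ?b\<^sup>2)"
      by (rule mult_left_mono) (rule zero_le_even_power')
    then show ?thesis
      using zero_le_even_power'[of R "Suc u"] by (simp add: algebra_simps del: power_Suc)
  qed
  have "summable (\<lambda>u. 2 * (R ^ (2 * Suc u) * (cnorm ip (h (Suc u)))\<^sup>2)
      + 2 * (R ^ (2 * Suc u) * (cnorm ip (g (Suc u)))\<^sup>2))"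
    using h g unfolding l2r_def mem_Collect_eq by (intro summable_add summable_mult)
  then show ?thesis
    unfolding l2r_def mem_Collect_eq by (rule summable_comparison_test[rotated]) (use bound in blast)
qed

subsection \<open>The form \<open>[f, g]\<^sub>\<Phi>\<close>\<close>

lemma form_part2_eq_qcnj:
  assumes "\<And>k. qbounded_op rm ip (\<Phi> k)"
  shows "form_part2 ip \<Phi> f g = (\<lambda>u. qcnj (form_part1 ip \<Phi> g f u))"
  unfolding form_part1_def form_part2_def qcnj_sum
  by (intro ext sum.cong refl) (metis assms ip_qadjoint ip_qcnj)

lemma form_part1_add_left:
  assumes "\<And>k. qbounded_op rm ip (\<Phi> k)"
  shows "form_part1 ip \<Phi> (f + a) g v = form_part1 ip \<Phi> f g v + form_part1 ip \<Phi> a g v"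
  unfolding form_part1_def by (simp add: qbounded_op_add[OF assms] ip_add_left sum.distrib)

lemma form_part1_add_right:
  "form_part1 ip \<Phi> f (g + b) v = form_part1 ip \<Phi> f g v + form_part1 ip \<Phi> f b v"
  unfolding form_part1_def by (simp add: ip_add_right sum.distrib)

lemma form_part2_add_left:
  assumes "\<And>k. qbounded_op rm ip (\<Phi> k)"
  shows "form_part2 ip \<Phi> (f + a) g u = form_part2 ip \<Phi> f g u + form_part2 ip \<Phi> a g u"
  by (simp add: form_part2_eq_qcnj[OF assms] form_part1_add_right qcnj_add)

lemma form_part2_add_right:
  assumes "\<And>k. qbounded_op rm ip (\<Phi> k)"
  shows "form_part2 ip \<Phi> f (g + b) u = form_part2 ip \<Phi> f g u + form_part2 ip \<Phi> f b u"
  by (simp add: form_part2_eq_qcnj[OF assms] form_part1_add_left[OF assms] qcnj_add)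

context
  fixes \<Phi> :: "nat \<Rightarrow> 'c \<Rightarrow> 'c" and M t r :: real
  assumes Phi_op: "\<And>k. qbounded_op rm ip (\<Phi> k)"
    and Phi_le: "\<And>k c. cnorm ip (\<Phi> k c) \<le> M * (1 / t) ^ k * cnorm ip c"
    and "0 \<le> M" "0 < r" "r < t" "r < 1"
begin

lemma form_part1_term_le:
  assumes f: "geom_dominated r f F" and g: "geom_dominated r g G" and "1 \<le> u" "u \<le> v"
  shows "norm (ip (\<Phi> (v - u) (f v)) (g u)) \<le> M * F * G * (r / t) ^ (v - u) * (r\<^sup>2) ^ u"
proof -
  have "norm (ip (\<Phi> (v - u) (f v)) (g u)) \<le> cnorm ip (\<Phi> (v - u) (f v)) * cnorm ip (g u)"
    by (rule norm_ip_le)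
  also have "\<dots> \<le> (M * (1 / t) ^ (v - u) * (F * r ^ v)) * (G * r ^ u)"
    using f g \<open>1 \<le> u\<close> \<open>u \<le> v\<close> \<open>0 \<le> M\<close> \<open>0 < r\<close> \<open>r < t\<close> Phi_le[of "v - u" "f v"]
    unfolding geom_dominated_def
    by (intro mult_mono mult_left_mono order_trans[OF Phi_le]) (auto simp: cnorm_nonneg)
  also have "r ^ v = r ^ (v - u) * r ^ u"
    using \<open>u \<le> v\<close> by (simp flip: power_add)
  finally show ?thesis
    by (simp add: power_divide power_mult_distrib power2_eq_square power_one_over ac_simps)
qed

lemma form_part1_summable_bound:
  assumes f: "geom_dominated r f F" and g: "geom_dominated r g G"
  shows "summable (form_part1 ip \<Phi> f g)"
    and "norm (\<Sum>v. form_part1 ip \<Phi> f g v) \<le> M * F * G / ((1 - r / t) * (1 - r\<^sup>2))"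
proof -
  have "0 \<le> M * F * G"
    using f g \<open>0 \<le> M\<close> by (simp add: geom_dominated_def)
  moreover have "r\<^sup>2 < 1"
    using \<open>0 < r\<close> \<open>r < 1\<close> by (simp add: power_less_one_iff)
  ultimately show "summable (form_part1 ip \<Phi> f g)"
    and "norm (\<Sum>v. form_part1 ip \<Phi> f g v) \<le> M * F * G / ((1 - r / t) * (1 - r\<^sup>2))"
    using triangular_series_bound[of "r / t" "r\<^sup>2" "M * F * G" "\<lambda>v u. ip (\<Phi> (v - u) (f v)) (g u)"]
      form_part1_term_le[OF f g] \<open>0 < r\<close> \<open>r < t\<close>
    by (simp_all add: form_part1_def[abs_def])
qed

lemma form_part2_summable:
  assumes "geom_dominated r f F" and "geom_dominated r g G"
  shows "summable (form_part2 ip \<Phi> f g)"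
  unfolding form_part2_eq_qcnj[OF Phi_op]
  by (rule bounded_linear.summable[OF bounded_linear_qcnj form_part1_summable_bound(1)[OF assms(2,1)]])

lemma suminf_form_part2:
  assumes "geom_dominated r f F" and "geom_dominated r g G"
  shows "(\<Sum>u. form_part2 ip \<Phi> f g u) = qcnj (\<Sum>u. form_part1 ip \<Phi> g f u)"
  using bounded_linear.suminf[OF bounded_linear_qcnj form_part1_summable_bound(1)[OF assms(2,1)]]
  by (simp add: form_part2_eq_qcnj[OF Phi_op])

lemma norm_phi_form_le:
  assumes f: "geom_dominated r f F" and g: "geom_dominated r g G"
  shows "norm (phi_form ip \<Phi> f g) \<le> 2 * M / ((1 - r / t) * (1 - r\<^sup>2)) * F * G"
proof -
  have "norm (phi_form ip \<Phi> f g) \<le> norm (\<Sum>v. form_part1 ip \<Phi> f g v) + norm (\<Sum>u. form_part1 ip \<Phi> g f u)"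
    unfolding phi_form_def suminf_form_part2[OF f g] by (rule order_trans[OF norm_triangle_ineq]) simp
  also have "\<dots> \<le> M * F * G / ((1 - r / t) * (1 - r\<^sup>2)) + M * G * F / ((1 - r / t) * (1 - r\<^sup>2))"
    by (intro add_mono form_part1_summable_bound(2) f g)
  finally show ?thesis
    by (simp add: field_simps)
qed

lemma phi_form_add_left:
  assumes "geom_dominated r f F" "geom_dominated r a A" "geom_dominated r g G"
  shows "phi_form ip \<Phi> (f + a) g = phi_form ip \<Phi> f g + phi_form ip \<Phi> a g"
  unfolding phi_form_def form_part1_add_left[OF Phi_op] form_part2_add_left[OF Phi_op]
  using assms by (simp add: suminf_add[symmetric] form_part1_summable_bound(1) form_part2_summable)

lemma phi_form_add_right:
  assumes "geom_dominated r f F" "geom_dominated r g G" "geom_dominated r b B"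
  shows "phi_form ip \<Phi> f (g + b) = phi_form ip \<Phi> f g + phi_form ip \<Phi> f b"
  unfolding phi_form_def form_part1_add_right form_part2_add_right[OF Phi_op]
  using assms by (simp add: suminf_add[symmetric] form_part1_summable_bound(1) form_part2_summable)

lemma form_parts_summable_l2r:
  assumes "f \<in> l2r ip (1 / r)" and "g \<in> l2r ip (1 / r)"
  shows "summable (form_part1 ip \<Phi> f g)" and "summable (form_part2 ip \<Phi> f g)"
proof -
  note f_dom = l2r_geom_dominated[OF \<open>0 < r\<close> assms(1)] and g_dom = l2r_geom_dominated[OF \<open>0 < r\<close> assms(2)]
  show "summable (form_part1 ip \<Phi> f g)"
    by (rule form_part1_summable_bound(1)[OF f_dom g_dom])
  show "summable (form_part2 ip \<Phi> f g)"
    by (rule form_part2_summable[OF f_dom g_dom])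
qed

lemma phi_form_l2r_continuous:
  assumes "f \<in> l2r ip (1 / r)" and "g \<in> l2r ip (1 / r)" and "0 < \<epsilon>"
  shows "\<exists>\<delta>>0. \<forall>f'\<in>l2r ip (1 / r). \<forall>g'\<in>l2r ip (1 / r).
    l2r_norm ip (1 / r) (f' - f) < \<delta> \<and> l2r_norm ip (1 / r) (g' - g) < \<delta> \<longrightarrow>
    norm (phi_form ip \<Phi> f' g' - phi_form ip \<Phi> f g) < \<epsilon>"
proof (rule bounded_biadditive_continuous[OF l2r_diff _ _ _ l2r_norm_nonneg _ assms])
  note dominated = l2r_geom_dominated[OF \<open>0 < r\<close>]
  show "phi_form ip \<Phi> (x + y) z = phi_form ip \<Phi> x z + phi_form ip \<Phi> y z"
    if "x \<in> l2r ip (1 / r)" "y \<in> l2r ip (1 / r)" "z \<in> l2r ip (1 / r)" for x y z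
    using phi_form_add_left[OF dominated[OF that(1)] dominated[OF that(2)] dominated[OF that(3)]] .
  show "phi_form ip \<Phi> x (y + z) = phi_form ip \<Phi> x y + phi_form ip \<Phi> x z"
    if "x \<in> l2r ip (1 / r)" "y \<in> l2r ip (1 / r)" "z \<in> l2r ip (1 / r)" for x y z
    using phi_form_add_right[OF dominated[OF that(1)] dominated[OF that(2)] dominated[OF that(3)]] .
  show "norm (phi_form ip \<Phi> x y)
      \<le> 2 * M / ((1 - r / t) * (1 - r\<^sup>2)) * l2r_norm ip (1 / r) x * l2r_norm ip (1 / r) y"
    if "x \<in> l2r ip (1 / r)" "y \<in> l2r ip (1 / r)" for x y
    using norm_phi_form_le[OF dominated[OF that(1)] dominated[OF that(2)]] .
  have "0 < (1 - r / t) * (1 - r\<^sup>2)"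
    using \<open>0 < r\<close> \<open>r < t\<close> \<open>r < 1\<close> by (simp add: power_less_one_iff)
  then show "0 \<le> 2 * M / ((1 - r / t) * (1 - r\<^sup>2))"
    using \<open>0 \<le> M\<close> by simp
qed

end

end

theorem proposition6p2:
  fixes lm rm :: "quat \<Rightarrow> 'c::ab_group_add \<Rightarrow> 'c"
    and ip :: "'c \<Rightarrow> 'c \<Rightarrow> quat"
    and \<Phi> :: "nat \<Rightarrow> 'c \<Rightarrow> 'c"
    and r r0 R :: real
  assumes hilb: "two_sided_qhilbert lm rm ip"
    and ip_lm: "\<forall>c d q. ip c (lm q d) = ip (lm (qcnj q) c) d"
    and r: "0 < r" "r < r0" "r0 < 1" "R = 1 / r"
    and coeffs: "\<forall>u. qbounded_op rm ip (\<Phi> u)"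
    and Phi: "\<exists>\<Psi> :: quat \<Rightarrow> 'c \<Rightarrow> 'c.
       (\<forall>p. norm p \<le> r0 \<longrightarrow> qbounded_op rm ip (\<Psi> p)) \<and>
       (\<forall>p. norm p < r0 \<longrightarrow>
          (\<lambda>N. opnorm ip (\<lambda>c. \<Psi> p c - (\<Sum>u<N. lm (qpow p u) (\<Phi> u c)))) \<longlonglongrightarrow> 0) \<and>
       (\<forall>p. norm p \<le> r0 \<longrightarrow> (\<forall>\<epsilon>>0. \<exists>\<delta>>0. \<forall>p'. norm p' \<le> r0 \<and> norm (p' - p) < \<delta> \<longrightarrow>
          opnorm ip (\<lambda>c. \<Psi> p' c - \<Psi> p c) < \<epsilon>))"
  shows "(\<forall>f\<in>l2r ip R. \<forall>g\<in>l2r ip R.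
            summable (form_part1 ip \<Phi> f g) \<and> summable (form_part2 ip \<Phi> f g)) \<and>
         (\<forall>f\<in>l2r ip R. \<forall>g\<in>l2r ip R. \<forall>\<epsilon>>0. \<exists>\<delta>>0. \<forall>f'\<in>l2r ip R. \<forall>g'\<in>l2r ip R.
            l2r_norm ip R (f' - f) < \<delta> \<and> l2r_norm ip R (g' - g) < \<delta> \<longrightarrow>
            norm (phi_form ip \<Phi> f' g' - phi_form ip \<Phi> f g) < \<epsilon>)"
proof -
  interpret qhilbert lm rm ip
    by (rule qhilbert.intro[OF hilb])
  \<comment> \<open>Only the expansion of \<open>\<Psi>\<close> at one real point \<open>t \<in> (r, r0)\<close> is used.\<close>
  obtain \<Psi> :: "quat \<Rightarrow> 'c \<Rightarrow> 'c" where Psi_op: "\<And>p. norm p \<le> r0 \<Longrightarrow> qbounded_op rm ip (\<Psi> p)"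
    and Psi_series: "\<And>p. norm p < r0 \<Longrightarrow>
      (\<lambda>N. opnorm ip (\<lambda>c. \<Psi> p c - (\<Sum>u<N. lm (qpow p u) (\<Phi> u c)))) \<longlonglongrightarrow> 0"
    using Phi by blast
  define t where "t = (r + r0) / 2"
  have "r < t" "t < r0" "norm (qreal t) = t"
    using r by (simp_all add: t_def)
  then obtain M where "0 \<le> M" and Phi_le: "\<And>k c. cnorm ip (\<Phi> k c) \<le> M * (1 / t) ^ k * cnorm ip c"
    using power_series_coeff_bound[OF coeffs[rule_format] Psi_op[of "qreal t"] _ Psi_series[of "qreal t"]] r
    by auto
  note estimates = coeffs[rule_format] Phi_le \<open>0 \<le> M\<close> \<open>0 < r\<close> \<open>r < t\<close>
  have "r < 1"
    using r by simp
  show ?thesis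
    unfolding \<open>R = 1 / r\<close>
    by (intro conjI ballI allI impI form_parts_summable_l2r[OF estimates \<open>r < 1\<close>]
        phi_form_l2r_continuous[OF estimates \<open>r < 1\<close>])
qed

end
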